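(* Let $F$ be a $4$-regular graph, let $P$ be a circuit partition of $F$, let $D$ be a directed version of $\mathrm{Tch}(P)$, and let $B$ be a strictly fundamental cycle basis of $F$. Then $\mathrm{CM}(\mathrm{Tch}(P),\pi_P(B),D)$ is totally unimodular.
   Context: Graphs: $G=(V,H,E,\epsilon)$ with finite sets of vertices $V$ and half-edges $H$, a partition $E$ of $H$ into unordered pairs (edges), and $\epsilon:H\to V$; loops and multiple edges allowed. A directed version orders each edge as (tail, head). A single transition is an unordered pair of distinct half-edges incident with a common vertex; a directed single transition is such an ordered pair. A closed walk is a sequence $((h_1,h_2),\dots,(h_{n-1},h_n))$ of directed single transitions with $\{h_2,h_3\},\{h_4,h_5\},\dots,\{h_n,h_1\}$ edges, up to cyclic shift. $\sigma(D,W)\in\mathbb Z^{E}$ counts, at each edge, traversals by $W$ along its direction in $D$ minus traversals against it. An oriented circuit is a nonempty closed walk in which each half-edge occurs at most once; a circuit is one with orientation forgotten. For a maximal forest $T$ of $G$ and an edge $e\notin T$, the fundamental circuit of $e$ is the unique circuit whose only edge outside $T$ is $e$; a strictly fundamental cycle basis w.r.t. $T$ is the set of these fundamental circuits, each given an arbitrary orientation. For a (multi)set $\Gamma$ of closed walks, $\mathrm{CM}(G,\Gamma,D)$ is the $\Gamma\times E(G)$ matrix whose row indexed by $W$ is $\sigma(D,W)$. A matrix is totally unimodular if every square submatrix has determinant in $\{-1,0,1\}$. $F$ is $4$-regular if every vertex is incident with exactly $4$ half-edges. A transition at $v$ is a partition of the four half-edges at $v$ into two single transitions. A circuit partition $P$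 is a set of circuits of $F$ such that every half-edge lies in exactly one single transition of exactly one circuit of $P$; $\tau(P)$ is the set of transitions both of whose single transitions occur in circuits of $P$. The touch-graph $\mathrm{Tch}(P)$ has vertex set $P$, half-edge set the set of single transitions occurring in circuits of $P$, edge set $\tau(P)$, and maps each single transition to the circuit containing it. For a closed walk $W$ of $F$, $\pi_P(W)$ is obtained by replacing each directed single transition $(h,h')$ of $W$ by $(s,s')$, where $s,s'$ are the single transitions of circuits of $P$ containing $h,h'$, and deleting pairs with $s=s'$; it is a closed walk of $\mathrm{Tch}(P)$ in which each remaining $(s,s')$ traverses edge $\{s,s'\}$ from half-edge $s$ to half-edge $s'$. $\pi_P(B)$ is the multiset $\{\pi_P(W):W\in B\}$ (rows indexed by $B$). *)

theory Defs
  imports "Jordan_Normal_Form.Determinant"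
begin

text \<open>A graph G = (V,H,E,eps): V vertices, H half-edges, E a partition of H into
unordered pairs (edges), eps : H -> V the incidence map. Loops and multiple edges allowed.\<close>

definition graph :: "'v set \<Rightarrow> 'h set \<Rightarrow> 'h set set \<Rightarrow> ('h \<Rightarrow> 'v) \<Rightarrow> bool" where
  "graph V H E eps \<longleftrightarrow> finite V \<and> finite H \<and>
     (\<forall>e\<in>E. card e = 2 \<and> e \<subseteq> H) \<and>
     (\<forall>e1\<in>E. \<forall>e2\<in>E. e1 \<noteq> e2 \<longrightarrow> e1 \<inter> e2 = {}) \<and> \<Union>E = H \<and>
     (\<forall>h\<in>H. eps h \<in> V)"

text \<open>A directed version: each edge e gets a tail half-edge tail e \<in> e (the other one is the head).\<close>
definition directed_version :: "'h set set \<Rightarrow> ('h set \<Rightarrow> 'h) \<Rightarrow> bool" where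
  "directed_version E tail \<longleftrightarrow> (\<forall>e\<in>E. tail e \<in> e)"

definition four_regular :: "'v set \<Rightarrow> 'h set \<Rightarrow> ('h \<Rightarrow> 'v) \<Rightarrow> bool" where
  "four_regular V H eps \<longleftrightarrow> (\<forall>v\<in>V. card {h\<in>H. eps h = v} = 4)"

definition dir_single_transition :: "'h set \<Rightarrow> ('h \<Rightarrow> 'v) \<Rightarrow> 'h \<times> 'h \<Rightarrow> bool" where
  "dir_single_transition H eps p \<longleftrightarrow>
     fst p \<in> H \<and> snd p \<in> H \<and> fst p \<noteq> snd p \<and> eps (fst p) = eps (snd p)"

text \<open>A closed walk ((h1,h2),...,(h_{n-1},h_n)) is represented by a list of directed single
transitions (one representative of its cyclic-shift class). Its edge traversals are the pairs
(h2,h3), (h4,h5), ..., (hn,h1): the walk traverses edge {h2,h3} from h2 to h3, etc.\<close>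
definition walk_travs :: "('h \<times> 'h) list \<Rightarrow> ('h \<times> 'h) list" where
  "walk_travs W = map (\<lambda>i. (snd (W ! i), fst (W ! ((i + 1) mod length W)))) [0..<length W]"

definition closed_walk :: "'h set \<Rightarrow> 'h set set \<Rightarrow> ('h \<Rightarrow> 'v) \<Rightarrow> ('h \<times> 'h) list \<Rightarrow> bool" where
  "closed_walk H E eps W \<longleftrightarrow>
     (\<forall>p\<in>set W. dir_single_transition H eps p) \<and>
     (\<forall>t\<in>set (walk_travs W). {fst t, snd t} \<in> E)"

definition walk_edges :: "('h \<times> 'h) list \<Rightarrow> 'h set set" where
  "walk_edges W = (\<lambda>t. {fst t, snd t}) ` set (walk_travs W)"

definition walk_halfedges :: "('h \<times> 'h) list \<Rightarrow> 'h list" where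
  "walk_halfedges W = concat (map (\<lambda>p. [fst p, snd p]) W)"

definition oriented_circuit :: "'h set \<Rightarrow> 'h set set \<Rightarrow> ('h \<Rightarrow> 'v) \<Rightarrow> ('h \<times> 'h) list \<Rightarrow> bool" where
  "oriented_circuit H E eps W \<longleftrightarrow>
     W \<noteq> [] \<and> closed_walk H E eps W \<and> distinct (walk_halfedges W)"

definition sigma_trav :: "('h set \<Rightarrow> 'h) \<Rightarrow> ('h \<times> 'h) list \<Rightarrow> 'h set \<Rightarrow> int" where
  "sigma_trav tail trs e =
     int (length (filter (\<lambda>t. {fst t, snd t} = e \<and> fst t = tail e) trs))
   - int (length (filter (\<lambda>t. {fst t, snd t} = e \<and> snd t = tail e) trs))"

definition sigma :: "('h set \<Rightarrow> 'h) \<Rightarrow> ('h \<times> 'h) list \<Rightarrow> 'h set \<Rightarrow> int" where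
  "sigma tail W = sigma_trav tail (walk_travs W)"

definition forest :: "'h set \<Rightarrow> 'h set set \<Rightarrow> ('h \<Rightarrow> 'v) \<Rightarrow> 'h set set \<Rightarrow> bool" where
  "forest H E eps T \<longleftrightarrow> T \<subseteq> E \<and>
     \<not> (\<exists>W. oriented_circuit H E eps W \<and> walk_edges W \<subseteq> T)"

definition maximal_forest :: "'h set \<Rightarrow> 'h set set \<Rightarrow> ('h \<Rightarrow> 'v) \<Rightarrow> 'h set set \<Rightarrow> bool" where
  "maximal_forest H E eps T \<longleftrightarrow> forest H E eps T \<and>
     (\<forall>e\<in>E - T. \<not> forest H E eps (insert e T))"

text \<open>B is a strictly fundamental cycle basis w.r.t. T: it consists of exactly one oriented
representative of the fundamental circuit of each non-tree edge e (the unique circuit whose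
only edge outside T is e), in an arbitrary orientation.\<close>
definition strictly_fundamental_basis ::
    "'h set \<Rightarrow> 'h set set \<Rightarrow> ('h \<Rightarrow> 'v) \<Rightarrow> 'h set set \<Rightarrow> ('h \<times> 'h) list set \<Rightarrow> bool" where
  "strictly_fundamental_basis H E eps T B \<longleftrightarrow> maximal_forest H E eps T \<and>
     (\<exists>f. bij_betw f B (E - T) \<and>
        (\<forall>W\<in>B. oriented_circuit H E eps W \<and> walk_edges W - T = {f W}))"

definition strictly_fundamental_cycle_basis ::
    "'h set \<Rightarrow> 'h set set \<Rightarrow> ('h \<Rightarrow> 'v) \<Rightarrow> ('h \<times> 'h) list set \<Rightarrow> bool" where
  "strictly_fundamental_cycle_basis H E eps B \<longleftrightarrow>
     (\<exists>T. strictly_fundamental_basis H E eps T B)"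

definition strans :: "('h \<times> 'h) list \<Rightarrow> 'h set set" where
  "strans C = (\<lambda>p. {fst p, snd p}) ` set C"

text \<open>A circuit partition is a set P of circuits, each represented by one oriented circuit
(the orientation is irrelevant for everything below), such that every half-edge lies in
exactly one single transition of exactly one circuit of P.\<close>
definition circuit_partition ::
    "'h set \<Rightarrow> 'h set set \<Rightarrow> ('h \<Rightarrow> 'v) \<Rightarrow> ('h \<times> 'h) list set \<Rightarrow> bool" where
  "circuit_partition H E eps P \<longleftrightarrow>
     (\<forall>C\<in>P. oriented_circuit H E eps C) \<and>
     (\<forall>h\<in>H. \<exists>!cs. fst cs \<in> P \<and> snd cs \<in> strans (fst cs) \<and> h \<in> snd cs)"

text \<open>Half-edges of Tch(P): the single transitions occurring in circuits of P.\<close>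
definition tch_halfedges :: "('h \<times> 'h) list set \<Rightarrow> 'h set set" where
  "tch_halfedges P = (\<Union>C\<in>P. strans C)"

text \<open>Edges of Tch(P): tau(P), the transitions (at some vertex v: partitions of the four
half-edges at v into two single transitions) both of whose single transitions occur in P.\<close>
definition tch_edges :: "'v set \<Rightarrow> 'h set \<Rightarrow> ('h \<Rightarrow> 'v) \<Rightarrow> ('h \<times> 'h) list set \<Rightarrow> 'h set set set" where
  "tch_edges V H eps P = {{s1, s2} | s1 s2.
     s1 \<in> tch_halfedges P \<and> s2 \<in> tch_halfedges P \<and> s1 \<inter> s2 = {} \<and>
     (\<exists>v\<in>V. s1 \<union> s2 = {h\<in>H. eps h = v})}"

text \<open>Incidence of Tch(P): a single transition is mapped to the circuit containing it.\<close>
definition tch_eps :: "('h \<times> 'h) list set \<Rightarrow> 'h set \<Rightarrow> ('h \<times> 'h) list" where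
  "tch_eps P s = (THE C. C \<in> P \<and> s \<in> strans C)"

definition pst :: "('h \<times> 'h) list set \<Rightarrow> 'h \<Rightarrow> 'h set" where
  "pst P h = (THE s. s \<in> tch_halfedges P \<and> h \<in> s)"

text \<open>Each remaining
(s,s') traverses the touch-graph edge {s,s'} from half-edge s to half-edge s'; hence the list
returned is exactly the list of edge traversals of the closed walk pi_P(W) of Tch(P).\<close>
definition piP :: "('h \<times> 'h) list set \<Rightarrow> ('h \<times> 'h) list \<Rightarrow> ('h set \<times> 'h set) list" where
  "piP P W = filter (\<lambda>p. fst p \<noteq> snd p) (map (\<lambda>p. (pst P (fst p), pst P (snd p))) W)"

text \<open>CM(Tch(P), pi_P(B), D): the B x tau(P) matrix whose row W is sigma(D, pi_P(W)).\<close>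
definition CM_touch :: "('h set set \<Rightarrow> 'h set) \<Rightarrow> ('h \<times> 'h) list set \<Rightarrow>
    ('h \<times> 'h) list \<Rightarrow> 'h set set \<Rightarrow> int" where
  "CM_touch tlD P W e = sigma_trav tlD (piP P W) e"

definition totally_unimodular :: "'r set \<Rightarrow> 'c set \<Rightarrow> ('r \<Rightarrow> 'c \<Rightarrow> int) \<Rightarrow> bool" where
  "totally_unimodular R C M \<longleftrightarrow>
     (\<forall>k f g. f ` {..<k} \<subseteq> R \<longrightarrow> inj_on f {..<k} \<longrightarrow> g ` {..<k} \<subseteq> C \<longrightarrow> inj_on g {..<k} \<longrightarrow>
        det (mat k k (\<lambda>(i, j). M (f i) (g j))) \<in> {-1, 0, 1})"

end

theory Submission
  imports Defs
begin

(* Let T be the maximal forest underlying B; the row of the fundamental circuit of a non-tree edge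
   records how this circuit passes through the transitions of P.  Root every component of T and fix
   at each vertex w a reference single transition lo w of P, the one through which the tree path from
   the root enters w.  The crossing set of a half-edge h is the set of vertices at which the tree
   path from the root to h changes single transition; it is the same at both ends of a tree edge.
   A transition of the circuit at w contributes to the column of the touch-graph edge at w, up to a
   sign given by the direction of that edge, the jump of the indicator of w between the crossing
   sets of its two half-edges.  Summed around the circuit these jumps telescope to the jump across
   the non-tree edge alone, so every row has the form  d c * ([v c \<in> X] - [v c \<in> Y])  with X, Y
   root paths of a rooted forest: the matrix is a network matrix.  Such matrices are totally
   unimodular, since pivoting on a row that separates a deepest column clears that column and
   Laplace expansion leaves a matrix of the same kind. *)

section \<open>Totally unimodular difference matrices\<close>

(* Modelled on the root paths of a rooted forest, ranked by depth. *)
definition ranked_family :: "('k \<Rightarrow> nat) \<Rightarrow> 'k set set \<Rightarrow> bool" where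
  "ranked_family rk F \<longleftrightarrow> (\<forall>X\<in>F. \<forall>Y\<in>F. \<forall>c\<in>X \<inter> Y. \<forall>c'\<in>X - Y. rk c < rk c')"

lemma ranked_familyD:
  "ranked_family rk F \<Longrightarrow> X \<in> F \<Longrightarrow> Y \<in> F \<Longrightarrow> c \<in> X \<Longrightarrow> c \<in> Y \<Longrightarrow> c' \<in> X \<Longrightarrow> c' \<notin> Y
    \<Longrightarrow> rk c < rk c'"
  unfolding ranked_family_def by blast

lemma ranked_family_mono: "ranked_family rk F \<Longrightarrow> G \<subseteq> F \<Longrightarrow> ranked_family rk G"
  unfolding ranked_family_def by blast

lemma ranked_family_cong:
  "ranked_family rk F \<Longrightarrow> \<forall>c\<in>\<Union>F. rk' c = rk c \<Longrightarrow> ranked_family rk' F"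
  unfolding ranked_family_def by (metis Diff_iff IntD1 UnionI)

lemma ranked_family_insert_top:
  assumes ranked: "ranked_family rk F" and below: "\<Union>F \<subseteq> P" and v: "v \<notin> P"
    and top: "\<forall>c\<in>P. rk c < rk v" and X0: "X0 \<in> F \<or> X0 = {}"
  shows "ranked_family rk (F \<union> {X0, insert v X0})"
  unfolding ranked_family_def
proof (intro ballI)
  fix X Y c c' assume X: "X \<in> F \<union> {X0, insert v X0}" and Y: "Y \<in> F \<union> {X0, insert v X0}"
    and c: "c \<in> X \<inter> Y" and c': "c' \<in> X - Y"
  have vF: "v \<notin> \<Union>F" and X0P: "X0 \<subseteq> P" using below v X0 by auto
  consider "X \<in> F" "Y \<in> F" | "X \<notin> F" "Y \<in> F" | "X \<in> F" "Y \<notin> F" | "X \<notin> F" "Y \<notin> F"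
    by blast
  then show "rk c < rk c'"
  proof cases
    case 1
    then show ?thesis using ranked c c' by (auto dest: ranked_familyD)
  next
    case 2
    then have "c \<in> X0" "X0 \<in> F" "c' = v \<or> c' \<in> X0" using X Y c c' vF X0 by auto
    then show ?thesis using ranked_familyD[OF ranked _ \<open>Y \<in> F\<close>, of X0 c c'] c c' top X0P by auto
  next
    case 3
    then have "c \<in> X0" "X0 \<in> F" "c' \<notin> X0" using X Y c c' vF X0 by auto
    then show ?thesis using ranked_familyD[OF ranked \<open>X \<in> F\<close> _, of X0 c c'] c c' by auto
  next
    case 4
    then show ?thesis using X Y c c' top X0P by auto
  qed
qed

lemma ranked_family_agree_below:
  assumes "ranked_family rk F" "X \<in> F" "Y \<in> F" "c \<in> X" "c \<in> Y" "rk c' \<le> rk c"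
  shows "c' \<in> X \<longleftrightarrow> c' \<in> Y"
  using ranked_familyD[OF assms(1,2,3) assms(4,5)] ranked_familyD[OF assms(1,3,2) assms(5,4)] assms(6)
  by (meson not_le)

definition indicator_diff_mat ::
    "nat \<Rightarrow> (nat \<Rightarrow> int) \<Rightarrow> (nat \<Rightarrow> 'k) \<Rightarrow> (nat \<Rightarrow> 'k set) \<Rightarrow> (nat \<Rightarrow> 'k set) \<Rightarrow> int mat" where
  "indicator_diff_mat n d g X Y = mat n n (\<lambda>(i, j). d j * (of_bool (g j \<in> X i) - of_bool (g j \<in> Y i)))"

lemma indicator_diff_mat_swap:
  "indicator_diff_mat n d g X Y = indicator_diff_mat n (\<lambda>j. - d j) g Y X"
  by (rule eq_matI) (auto simp: indicator_diff_mat_def algebra_simps)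

lemma indicator_diff_mat_delete:
  "mat_delete (indicator_diff_mat (Suc k) d g X Y) i0 j0 =
    indicator_diff_mat k (d \<circ> insert_index j0) (g \<circ> insert_index j0)
      (X \<circ> insert_index i0) (Y \<circ> insert_index i0)"
  by (rule eq_matI) (auto simp: mat_delete_def indicator_diff_mat_def insert_index_def)

lemma det_column_single_entry:
  fixes M :: "'a :: comm_ring_1 mat"
  assumes M: "M \<in> carrier_mat n n" and i0: "i0 < n" and j0: "j0 < n"
    and zero: "\<And>i. i < n \<Longrightarrow> i \<noteq> i0 \<Longrightarrow> M $$ (i, j0) = 0"
  shows "det M = M $$ (i0, j0) * cofactor M i0 j0"
proof -
  have "det M = (\<Sum>i<n. M $$ (i, j0) * cofactor M i j0)"
    by (rule laplace_expansion_column[OF M j0])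
  also have "\<dots> = (\<Sum>i\<in>{i0}. M $$ (i, j0) * cofactor M i j0)"
    by (rule sum.mono_neutral_right) (use i0 zero in auto)
  finally show ?thesis by simp
qed

lemma det_identity_plus_column:
  assumes k: "k < n"
  shows "det (mat n n (\<lambda>(i, l). if i = l then 1 else if l = k then c i else 0) :: 'a :: comm_ring_1 mat) = 1"
proof -
  let ?L = "mat n n (\<lambda>(i, l). if i = l then 1 else if l = k then c i else 0) :: 'a mat"
  have L: "?L \<in> carrier_mat n n" by simp
  have "det ?L = (\<Sum>j<n. ?L $$ (k, j) * cofactor ?L k j)"
    by (rule laplace_expansion_row[OF L k])
  also have "\<dots> = (\<Sum>j\<in>{k}. ?L $$ (k, j) * cofactor ?L k j)"
    by (rule sum.mono_neutral_right) (use k in auto)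
  also have "\<dots> = det (mat_delete ?L k k)"
    using k by (simp add: cofactor_def power_even_eq[symmetric])
  also have "mat_delete ?L k k = 1\<^sub>m (n - 1)"
    by (rule eq_matI) (auto simp: mat_delete_def)
  finally show ?thesis by simp
qed

lemma det_add_multiples_of_row:
  fixes M M' :: "'a :: comm_ring_1 mat"
  assumes M: "M \<in> carrier_mat n n" and M': "M' \<in> carrier_mat n n" and k: "k < n"
    and entries: "\<And>i j. i < n \<Longrightarrow> j < n \<Longrightarrow>
      M' $$ (i, j) = M $$ (i, j) + (if i = k then 0 else c i * M $$ (k, j))"
  shows "det M' = det M"
proof -
  define L :: "'a mat" where "L = mat n n (\<lambda>(i, l). if i = l then 1 else if l = k then c i else 0)"
  have L: "L \<in> carrier_mat n n" unfolding L_def by simp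
  have "M' = L * M"
  proof (rule eq_matI)
    fix i j assume "i < dim_row (L * M)" "j < dim_col (L * M)"
    then have i: "i < n" and j: "j < n" using L M by auto
    have "(L * M) $$ (i, j) = (\<Sum>l\<in>{0..<n}. L $$ (i, l) * M $$ (l, j))"
      using i j L M by (simp add: scalar_prod_def)
    also have "\<dots> = (\<Sum>l\<in>{0..<n}. (if l = i then M $$ (l, j) else 0) +
        (if l = k \<and> i \<noteq> k then c i * M $$ (l, j) else 0))"
      by (rule sum.cong) (use i in \<open>auto simp: L_def\<close>)
    also have "\<dots> = M' $$ (i, j)"
      using i j k by (simp add: sum.distrib entries)
    finally show "M' $$ (i, j) = (L * M) $$ (i, j)" ..
  qed (use L M M' in auto)
  moreover have "det L = 1" unfolding L_def by (rule det_identity_plus_column[OF k])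
  ultimately show ?thesis using det_mult[OF L M] by simp
qed

(* Since g j0 has maximal rank, every row whose positive (negative) set contains g j0 agrees with
   X i0 in all columns; subtracting (adding) row i0 therefore replaces that set by Y i0. *)
lemma indicator_diff_mat_eliminate:
  assumes ranked: "ranked_family rk F" and rows: "\<forall>i<n. X i \<in> F \<and> Y i \<in> F"
    and j0: "j0 < n" and top: "\<forall>j<n. rk (g j) \<le> rk (g j0)"
    and i0: "i0 < n" and pivot: "g j0 \<in> X i0" "g j0 \<notin> Y i0"
  obtains X' Y' where "\<forall>i<n. X' i \<in> F \<and> Y' i \<in> F"
    and "det (indicator_diff_mat n d g X' Y') = det (indicator_diff_mat n d g X Y)"
    and "X' i0 = X i0" and "Y' i0 = Y i0"
    and "\<forall>i<n. i \<noteq> i0 \<longrightarrow> (g j0 \<in> X' i \<longleftrightarrow> g j0 \<in> Y' i)"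
proof -
  have agree: "g j \<in> Z \<longleftrightarrow> g j \<in> X i0" if "Z \<in> F" "g j0 \<in> Z" "j < n" for Z j
    using ranked_family_agree_below[OF ranked that(1) _ that(2) pivot(1)] rows i0 top that(3) by blast
  define X' where "X' i = (if i \<noteq> i0 \<and> g j0 \<in> X i \<and> g j0 \<notin> Y i then Y i0 else X i)" for i
  define Y' where "Y' i = (if i \<noteq> i0 \<and> g j0 \<notin> X i \<and> g j0 \<in> Y i then Y i0 else Y i)" for i
  define c :: "nat \<Rightarrow> int" where "c i = of_bool (g j0 \<in> Y i) - of_bool (g j0 \<in> X i)" for i
  let ?M = "indicator_diff_mat n d g X Y" and ?M' = "indicator_diff_mat n d g X' Y'"
  have "\<forall>i<n. X' i \<in> F \<and> Y' i \<in> F" using rows i0 unfolding X'_def Y'_def by auto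
  moreover have "det ?M' = det ?M"
  proof (rule det_add_multiples_of_row[where k = i0 and c = c])
    fix i j assume i: "i < n" and j: "j < n"
    consider "g j0 \<in> X i \<longleftrightarrow> g j0 \<in> Y i" | "i \<noteq> i0" "g j0 \<in> X i" "g j0 \<notin> Y i"
      | "i \<noteq> i0" "g j0 \<notin> X i" "g j0 \<in> Y i" | "i = i0" by blast
    then show "?M' $$ (i, j) = ?M $$ (i, j) + (if i = i0 then 0 else c i * ?M $$ (i0, j))"
    proof cases
      case 1
      then have "X' i = X i" "Y' i = Y i" "c i = 0" by (auto simp: X'_def Y'_def c_def)
      then show ?thesis using i j by (simp add: indicator_diff_mat_def)
    next
      case 2
      then have "g j \<in> X i \<longleftrightarrow> g j \<in> X i0" using agree rows i j by blast
      then show ?thesis using 2 i j i0 by (simp add: indicator_diff_mat_def X'_def Y'_def c_def algebra_simps)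
    next
      case 3
      then have "g j \<in> Y i \<longleftrightarrow> g j \<in> X i0" using agree rows i j by blast
      then show ?thesis using 3 i j i0 by (simp add: indicator_diff_mat_def X'_def Y'_def c_def algebra_simps)
    next
      case 4
      then show ?thesis using i j by (simp add: indicator_diff_mat_def X'_def Y'_def)
    qed
  qed (use i0 in \<open>auto simp: indicator_diff_mat_def\<close>)
  ultimately show ?thesis by (rule that) (simp_all add: X'_def Y'_def pivot)
qed

lemma det_indicator_diff_mat_pivot_column:
  assumes ranked: "ranked_family rk F" and rows: "\<forall>i<Suc k. X i \<in> F \<and> Y i \<in> F"
    and signs: "\<forall>j<Suc k. d j \<in> {1, -1}"
    and j0: "j0 < Suc k" and top: "\<forall>j<Suc k. rk (g j) \<le> rk (g j0)"
    and i0: "i0 < Suc k" and pivot: "g j0 \<in> X i0" "g j0 \<notin> Y i0"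
    and minors: "\<And>d g X Y. \<forall>i<k. X i \<in> F \<and> Y i \<in> F \<Longrightarrow> \<forall>j<k. d j \<in> {1, -1} \<Longrightarrow>
      det (indicator_diff_mat k d g X Y) \<in> {-1, 0, 1}"
  shows "det (indicator_diff_mat (Suc k) d g X Y) \<in> {-1, 0, 1}"
proof -
  obtain X' Y' where rows': "\<forall>i<Suc k. X' i \<in> F \<and> Y' i \<in> F"
    and det_eq: "det (indicator_diff_mat (Suc k) d g X' Y') = det (indicator_diff_mat (Suc k) d g X Y)"
    and at_i0: "X' i0 = X i0" "Y' i0 = Y i0"
    and cleared: "\<forall>i<Suc k. i \<noteq> i0 \<longrightarrow> (g j0 \<in> X' i \<longleftrightarrow> g j0 \<in> Y' i)"
    using indicator_diff_mat_eliminate[OF ranked rows j0 top i0 pivot] by blast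
  let ?M = "indicator_diff_mat (Suc k) d g X' Y'"
  have "det ?M = ?M $$ (i0, j0) * cofactor ?M i0 j0"
    by (rule det_column_single_entry[OF _ i0 j0]) (use cleared j0 in \<open>auto simp: indicator_diff_mat_def\<close>)
  moreover have "?M $$ (i0, j0) \<in> {1, -1}" using i0 j0 pivot at_i0 signs by (auto simp: indicator_diff_mat_def)
  moreover have "det (mat_delete ?M i0 j0) \<in> {-1, 0, 1}"
    unfolding indicator_diff_mat_delete by (rule minors) (use rows' signs in \<open>auto simp: insert_index_def\<close>)
  ultimately show ?thesis using det_eq by (auto simp: cofactor_def minus_one_power_iff)
qed

lemma det_indicator_diff_mat:
  assumes ranked: "ranked_family rk F"
  shows "\<forall>i<n. X i \<in> F \<and> Y i \<in> F \<Longrightarrow> \<forall>j<n. d j \<in> {1, -1} \<Longrightarrow>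
    det (indicator_diff_mat n d g X Y) \<in> {-1, 0, 1}"
proof (induction n arbitrary: d g X Y)
  case 0
  then show ?case by (simp add: indicator_diff_mat_def)
next
  case (Suc k)
  let ?n = "Suc k"
  obtain j0 where j0: "j0 < ?n" and top: "\<forall>j<?n. rk (g j) \<le> rk (g j0)"
  proof -
    obtain j0 where "j0 \<in> {..<?n}" and "Max ((rk \<circ> g) ` {..<?n}) = (rk \<circ> g) j0"
      using obtains_MAX[of "{..<?n}" "rk \<circ> g"] by blast
    then show ?thesis using Max_ge[of "(rk \<circ> g) ` {..<?n}"] by (intro that[of j0]) auto
  qed
  consider (zero) "\<forall>i<?n. g j0 \<in> X i \<longleftrightarrow> g j0 \<in> Y i" | (pos) i0 where "i0 < ?n" "g j0 \<in> X i0" "g j0 \<notin> Y i0"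
    | (neg) i0 where "i0 < ?n" "g j0 \<in> Y i0" "g j0 \<notin> X i0" by blast
  then show ?case
  proof cases
    case zero
    let ?M = "indicator_diff_mat ?n d g X Y"
    have "det ?M = ?M $$ (0, j0) * cofactor ?M 0 j0"
      by (rule det_column_single_entry[OF _ _ j0]) (use zero j0 in \<open>auto simp: indicator_diff_mat_def\<close>)
    then show ?thesis using zero j0 by (simp add: indicator_diff_mat_def)
  next
    case pos
    then show ?thesis by (rule det_indicator_diff_mat_pivot_column[OF ranked Suc.prems j0 top _ _ _ Suc.IH])
  next
    case neg
    have "det (indicator_diff_mat ?n (\<lambda>j. - d j) g Y X) \<in> {-1, 0, 1}"
      by (rule det_indicator_diff_mat_pivot_column[OF ranked _ _ j0 top _ _ _ Suc.IH])
        (use neg Suc.prems in auto)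
    then show ?thesis by (simp only: indicator_diff_mat_swap[of ?n d g X Y])
  qed
qed

lemma totally_unimodular_indicator_rows:
  fixes R :: "'r set" and C :: "'c set"
  assumes ranked: "ranked_family rk F" and signs: "\<forall>c\<in>C. d c \<in> {1, -1}"
    and rows: "\<forall>r\<in>R. \<exists>X\<in>F. \<exists>Y\<in>F. \<forall>c\<in>C. M r c = d c * (of_bool (\<kappa> c \<in> X) - of_bool (\<kappa> c \<in> Y))"
  shows "totally_unimodular R C M"
proof -
  obtain X Y where XY: "\<forall>r\<in>R. X r \<in> F \<and> Y r \<in> F \<and>
      (\<forall>c\<in>C. M r c = d c * (of_bool (\<kappa> c \<in> X r) - of_bool (\<kappa> c \<in> Y r)))"
    using rows by metis
  show ?thesis unfolding totally_unimodular_def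
  proof (intro allI impI)
    fix k :: nat and f :: "nat \<Rightarrow> 'r" and g :: "nat \<Rightarrow> 'c"
    assume f: "f ` {..<k} \<subseteq> R" and "inj_on f {..<k}"
      and g: "g ` {..<k} \<subseteq> C" and "inj_on g {..<k}"
    have "mat k k (\<lambda>(i, j). M (f i) (g j)) = indicator_diff_mat k (d \<circ> g) (\<kappa> \<circ> g) (X \<circ> f) (Y \<circ> f)"
    proof (rule eq_matI)
      fix i j assume "i < dim_row (indicator_diff_mat k (d \<circ> g) (\<kappa> \<circ> g) (X \<circ> f) (Y \<circ> f))"
        and "j < dim_col (indicator_diff_mat k (d \<circ> g) (\<kappa> \<circ> g) (X \<circ> f) (Y \<circ> f))"
      then have ij: "i < k" "j < k" by (auto simp: indicator_diff_mat_def)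
      then have "f i \<in> R" "g j \<in> C" using f g by auto
      then show "mat k k (\<lambda>(i, j). M (f i) (g j)) $$ (i, j) =
          indicator_diff_mat k (d \<circ> g) (\<kappa> \<circ> g) (X \<circ> f) (Y \<circ> f) $$ (i, j)"
        using ij XY by (simp add: indicator_diff_mat_def)
    qed (simp_all add: indicator_diff_mat_def)
    moreover have "det (indicator_diff_mat k (d \<circ> g) (\<kappa> \<circ> g) (X \<circ> f) (Y \<circ> f)) \<in> {-1, 0, 1}"
      by (rule det_indicator_diff_mat[OF ranked]) (use f g XY signs in auto)
    ultimately show "det (mat k k (\<lambda>(i, j). M (f i) (g j))) \<in> {-1, 0, 1}" by simp
  qed
qed

section \<open>Walks and their traversals\<close>

definition walk_of_travs :: "('h \<times> 'h) list \<Rightarrow> ('h \<times> 'h) list" where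
  "walk_of_travs trs =
    map (\<lambda>i. (snd (trs ! ((i + length trs - 1) mod length trs)), fst (trs ! i))) [0..<length trs]"

lemma length_walk_of_travs [simp]: "length (walk_of_travs trs) = length trs"
  by (simp add: walk_of_travs_def)

lemma walk_travs_walk_of_travs: "walk_travs (walk_of_travs trs) = trs"
proof (rule nth_equalityI)
  show "length (walk_travs (walk_of_travs trs)) = length trs"
    by (simp add: walk_travs_def walk_of_travs_def)
next
  fix i assume "i < length (walk_travs (walk_of_travs trs))"
  then have i: "i < length trs" by (simp add: walk_travs_def walk_of_travs_def)
  have "((i + 1) mod length trs + length trs - 1) mod length trs = i"
  proof (cases "Suc i < length trs")
    case False
    then have "i = length trs - 1" using i by simp
    then show ?thesis using i by (cases "length trs") auto
  qed simp
  moreover have "Suc i mod length trs < length trs" by (rule mod_less_divisor) (use i in linarith)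
  ultimately show "walk_travs (walk_of_travs trs) ! i = trs ! i"
    using i by (simp add: walk_travs_def walk_of_travs_def)
qed

lemma map_fst_walk_travs: "map fst (walk_travs W) = map snd W"
  unfolding walk_travs_def by (rule nth_equalityI) auto

lemma map_snd_walk_travs: "map snd (walk_travs W) = rotate1 (map fst W)"
proof (rule nth_equalityI)
  fix i assume "i < length (map snd (walk_travs W))"
  then have i: "i < length W" by (simp add: walk_travs_def)
  have "Suc i mod length W < length W" by (rule mod_less_divisor) (use i in linarith)
  then show "map snd (walk_travs W) ! i = rotate1 (map fst W) ! i"
    using i by (simp add: walk_travs_def nth_rotate1)
qed (simp add: walk_travs_def)

lemma set_walk_halfedges: "set (walk_halfedges W) = fst ` set W \<union> snd ` set W"
  unfolding walk_halfedges_def by (induction W) auto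

lemma length_walk_halfedges: "length (walk_halfedges W) = 2 * length W"
  unfolding walk_halfedges_def by (induction W) auto

lemma distinct_walk_halfedges_transition:
  "distinct (walk_halfedges W) \<Longrightarrow> p \<in> set W \<Longrightarrow> fst p \<noteq> snd p"
  unfolding walk_halfedges_def by (induction W) auto

lemma set_walk_halfedges_walk_of_travs:
  "set (walk_halfedges (walk_of_travs trs)) = fst ` set trs \<union> snd ` set trs"
proof -
  let ?W = "walk_of_travs trs"
  have "fst ` set ?W = snd ` set trs"
    using arg_cong[OF map_snd_walk_travs[of ?W], of set] by (simp add: walk_travs_walk_of_travs)
  moreover have "snd ` set ?W = fst ` set trs"
    using arg_cong[OF map_fst_walk_travs[of ?W], of set] by (simp add: walk_travs_walk_of_travs)
  ultimately show ?thesis by (auto simp: set_walk_halfedges)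
qed

lemma sum_list_rotate1: "sum_list (rotate1 xs) = (sum_list xs :: 'a :: comm_monoid_add)"
  by (cases xs) (simp_all add: add.commute)

lemma sum_transitions_telescope:
  fixes f :: "'h \<Rightarrow> 'a :: ab_group_add"
  shows "(\<Sum>p\<leftarrow>W. f (fst p) - f (snd p)) = (\<Sum>t\<leftarrow>walk_travs W. f (snd t) - f (fst t))"
proof -
  have "(\<Sum>t\<leftarrow>walk_travs W. f (snd t) - f (fst t))
      = sum_list (map f (map snd (walk_travs W))) - sum_list (map f (map fst (walk_travs W)))"
    by (simp add: sum_list_subtractf comp_def)
  also have "\<dots> = sum_list (map f (map fst W)) - sum_list (map f (map snd W))"
    by (simp only: map_snd_walk_travs map_fst_walk_travs rotate1_map[symmetric] sum_list_rotate1)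
  finally show ?thesis by (simp add: sum_list_subtractf comp_def)
qed

lemma walk_halfedges_Cons [simp]: "walk_halfedges (p # W) = fst p # snd p # walk_halfedges W"
  by (simp add: walk_halfedges_def)

lemma distinct_walk_halfedges_disjoint:
  "distinct (walk_halfedges W) \<Longrightarrow> fst ` set W \<inter> snd ` set W = {}"
proof (induction W)
  case (Cons p W)
  then have "fst p \<notin> set (walk_halfedges W)" "snd p \<notin> set (walk_halfedges W)" "fst p \<noteq> snd p"
    "fst ` set W \<inter> snd ` set W = {}" by auto
  then show ?case unfolding set_walk_halfedges by auto
qed simp

lemma distinct_walk_travs: "distinct (walk_halfedges W) \<Longrightarrow> distinct (walk_travs W)"
proof -
  assume "distinct (walk_halfedges W)"
  then have "distinct (map snd W)" by (induction W) (auto simp: set_walk_halfedges)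
  then have "distinct (map fst (walk_travs W))" by (simp only: map_fst_walk_travs)
  then show ?thesis by (simp add: distinct_map)
qed

lemma oriented_circuit_traverses_once:
  assumes W: "oriented_circuit H E eps W"
    and t: "t \<in> set (walk_travs W)" and t': "t' \<in> set (walk_travs W)"
    and same_edge: "{fst t', snd t'} = {fst t, snd t}"
  shows "t' = t"
proof (rule ccontr)
  assume "t' \<noteq> t"
  have "fst t' = fst t \<and> snd t' = snd t \<or> fst t' = snd t \<and> snd t' = fst t"
    using same_edge by (simp add: doubleton_eq_iff)
  then have "fst t' = snd t" using \<open>t' \<noteq> t\<close> by (auto simp: prod_eq_iff)
  moreover have "fst t' \<in> snd ` set W" using t' arg_cong[OF map_fst_walk_travs[of W], of set] by auto
  moreover have "snd t \<in> fst ` set W"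
    using t arg_cong[OF map_snd_walk_travs[of W], of set] by auto
  ultimately have "fst t' \<in> fst ` set W \<inter> snd ` set W" by simp
  moreover have "fst ` set W \<inter> snd ` set W = {}"
    using W by (simp add: oriented_circuit_def distinct_walk_halfedges_disjoint)
  ultimately show False by blast
qed

lemma fundamental_circuit_other_traversals:
  assumes W: "oriented_circuit H E eps W" and fundamental: "walk_edges W - T = {e}"
    and t0: "t0 \<in> set (walk_travs W)" "{fst t0, snd t0} = e"
    and t: "t \<in> set (walk_travs W)" "t \<noteq> t0"
  shows "{fst t, snd t} \<in> T"
proof (rule ccontr)
  assume "{fst t, snd t} \<notin> T"
  moreover have "{fst t, snd t} \<in> walk_edges W" using t(1) unfolding walk_edges_def by (rule imageI)
  ultimately have "{fst t, snd t} \<in> walk_edges W - T" by simp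
  then have "{fst t, snd t} = e" unfolding fundamental by simp
  with t0(2) have "t = t0" by (intro oriented_circuit_traverses_once[OF W t0(1) t(1)]) simp
  with t(2) show False by contradiction
qed

lemma sum_differences_single_jump:
  fixes f :: "'h \<Rightarrow> 'a :: ab_group_add"
  assumes "distinct xs" and t0: "t0 \<in> set xs" and flat: "\<And>t. t \<in> set xs \<Longrightarrow> t \<noteq> t0 \<Longrightarrow> f (snd t) = f (fst t)"
  shows "(\<Sum>t\<leftarrow>xs. f (snd t) - f (fst t)) = f (snd t0) - f (fst t0)"
proof -
  have "(\<Sum>t\<leftarrow>xs. f (snd t) - f (fst t)) = (\<Sum>t\<in>set xs. f (snd t) - f (fst t))"
    by (rule sum_list_distinct_conv_sum_set[OF assms(1)])
  also have "\<dots> = (\<Sum>t\<in>{t0}. f (snd t) - f (fst t))"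
    by (rule sum.mono_neutral_right) (use t0 flat in auto)
  finally show ?thesis by simp
qed

section \<open>Forests\<close>

locale graph_forest =
  fixes V :: "'v set" and H :: "'h set" and E :: "'h set set" and eps :: "'h \<Rightarrow> 'v"
    and T :: "'h set set"
  assumes graph: "graph V H E eps" and forest: "forest H E eps T"
begin

lemma finite_H: "finite H"
  using graph by (simp add: graph_def)

lemma edge_halves:
  assumes "{a, b} \<in> E" shows "a \<in> H \<and> b \<in> H \<and> a \<noteq> b"
proof -
  have "card {a, b} = 2" "{a, b} \<subseteq> H" using graph assms by (auto simp: graph_def)
  then show ?thesis by (cases "a = b") auto
qed

lemma edges_disjoint: "e \<in> E \<Longrightarrow> e' \<in> E \<Longrightarrow> e \<noteq> e' \<Longrightarrow> e \<inter> e' = {}"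
  using graph unfolding graph_def by blast

lemma tree_edge: "e \<in> T \<Longrightarrow> e \<in> E"
  using forest by (auto simp: forest_def)

lemma tree_edge_halves: "{a, b} \<in> T \<Longrightarrow> a \<in> H \<and> b \<in> H \<and> a \<noteq> b"
  using edge_halves tree_edge by blast

lemma no_tree_circuit: "oriented_circuit H E eps W \<Longrightarrow> walk_edges W \<subseteq> T \<Longrightarrow> False"
  using forest by (auto simp: forest_def)

fun tree_path :: "'v \<Rightarrow> 'v \<Rightarrow> ('h \<times> 'h) list \<Rightarrow> bool" where
  "tree_path u w [] \<longleftrightarrow> u = w"
| "tree_path u w (t # r) \<longleftrightarrow> {fst t, snd t} \<in> T \<and> eps (fst t) = u \<and> tree_path (eps (snd t)) w r"

definition path_verts :: "'v \<Rightarrow> ('h \<times> 'h) list \<Rightarrow> 'v list" where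
  "path_verts u r = u # map (\<lambda>t. eps (snd t)) r"

lemma tree_path_append: "tree_path u w r \<Longrightarrow> tree_path w z r' \<Longrightarrow> tree_path u z (r @ r')"
  by (induction r arbitrary: u) auto

lemma tree_path_nth:
  "tree_path u w r \<Longrightarrow> i < length r \<Longrightarrow>
    eps (fst (r ! i)) = path_verts u r ! i \<and> eps (snd (r ! i)) = path_verts u r ! Suc i"
  by (induction r arbitrary: u i) (auto simp: path_verts_def nth_Cons split: nat.split)

lemma tree_path_end: "tree_path u w r \<Longrightarrow> path_verts u r ! length r = w"
  by (induction r arbitrary: u) (auto simp: path_verts_def)

lemma tree_path_edge:
  "tree_path u w r \<Longrightarrow> t \<in> set r \<Longrightarrow>
    {fst t, snd t} \<in> T \<and> eps (fst t) \<in> set (path_verts u r) \<and> eps (snd t) \<in> set (path_verts u r)"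
  by (induction r arbitrary: u) (auto simp: path_verts_def)

lemma tree_path_edge_vertex:
  assumes "tree_path u w r" and "{a, b} \<in> (\<lambda>t. {fst t, snd t}) ` set r"
  shows "eps a \<in> set (path_verts u r)"
proof -
  obtain t where "t \<in> set r" and "a = fst t \<or> a = snd t"
    using assms(2) by (auto simp: doubleton_eq_iff)
  then show ?thesis using tree_path_edge[OF assms(1)] by blast
qed

lemma tree_path_distinct_edges:
  "tree_path u w r \<Longrightarrow> distinct (path_verts u r) \<Longrightarrow> distinct (map (\<lambda>t. {fst t, snd t}) r)"
proof (induction r arbitrary: u)
  case (Cons t r)
  then have "eps (fst t) \<notin> set (path_verts (eps (snd t)) r)" by (simp add: path_verts_def)
  then have "{fst t, snd t} \<notin> (\<lambda>t. {fst t, snd t}) ` set r"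
    using tree_path_edge_vertex[of "eps (snd t)" w r "fst t" "snd t"] Cons.prems(1) by auto
  then show ?case using Cons.IH[of "eps (snd t)"] Cons.prems by (simp add: path_verts_def)
qed simp

lemma distinct_halves_of_distinct_edges:
  "\<forall>t\<in>set trs. {fst t, snd t} \<in> E \<Longrightarrow> distinct (map (\<lambda>t. {fst t, snd t}) trs) \<Longrightarrow>
    distinct (concat (map (\<lambda>t. [fst t, snd t]) trs))"
proof (induction trs)
  case (Cons t trs)
  have "{fst t, snd t} \<inter> {fst t', snd t'} = {}" if "t' \<in> set trs" for t'
    using Cons.prems that edges_disjoint[of "{fst t, snd t}" "{fst t', snd t'}"] by auto
  then have "fst t \<notin> fst ` set trs \<union> snd ` set trs" "snd t \<notin> fst ` set trs \<union> snd ` set trs"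
    by fastforce+
  moreover have "fst t \<noteq> snd t" using Cons.prems(1) edge_halves[of "fst t" "snd t"] by simp
  moreover have "distinct (concat (map (\<lambda>t. [fst t, snd t]) trs))" using Cons by simp
  moreover have "set (concat (map (\<lambda>t. [fst t, snd t]) trs)) = fst ` set trs \<union> snd ` set trs"
    by auto
  ultimately show ?case by simp
qed simp

lemma closed_tree_path_prev:
  assumes "tree_path u u trs" and "i < length trs"
  shows "eps (snd (trs ! ((i + length trs - 1) mod length trs))) = eps (fst (trs ! i))"
proof (cases i)
  case 0
  then have "(i + length trs - 1) mod length trs = length trs - 1" using assms(2) by simp
  then show ?thesis using assms 0 tree_path_nth[OF assms(1), of "length trs - 1"]
      tree_path_nth[OF assms(1), of 0] tree_path_end[OF assms(1)] by (simp add: path_verts_def)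
next
  case (Suc j)
  then have "(i + length trs - 1) mod length trs = j" using assms(2) by simp
  then show ?thesis using assms Suc tree_path_nth[OF assms(1), of j] tree_path_nth[OF assms(1), of i]
    by simp
qed

lemma no_closed_tree_trail:
  assumes ne: "trs \<noteq> []" and path: "tree_path u u trs"
    and distinct_edges: "distinct (map (\<lambda>t. {fst t, snd t}) trs)"
  shows False
proof -
  let ?W = "walk_of_travs trs"
  have in_E: "\<forall>t\<in>set trs. {fst t, snd t} \<in> E"
    using tree_path_edge[OF path] tree_edge by blast
  have "card (set (walk_halfedges ?W)) = length (walk_halfedges ?W)"
  proof -
    let ?L = "concat (map (\<lambda>t. [fst t, snd t]) trs)"
    have "set ?L = fst ` set trs \<union> snd ` set trs" by auto
    moreover have "length ?L = 2 * length trs" by (induction trs) auto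
    ultimately show ?thesis
      using distinct_card[OF distinct_halves_of_distinct_edges[OF in_E distinct_edges]]
      by (simp add: set_walk_halfedges_walk_of_travs length_walk_halfedges)
  qed
  then have distinct: "distinct (walk_halfedges ?W)" by (simp add: card_distinct)
  have "dir_single_transition H eps p" if p_W: "p \<in> set ?W" for p
  proof -
    obtain i where i: "i < length trs"
      and p: "p = (snd (trs ! ((i + length trs - 1) mod length trs)), fst (trs ! i))"
      using p_W by (auto simp: walk_of_travs_def)
    have "(i + length trs - 1) mod length trs < length trs" by (rule mod_less_divisor) (use i in linarith)
    then have "snd (trs ! ((i + length trs - 1) mod length trs)) \<in> H" "fst (trs ! i) \<in> H"
      using in_E i edge_halves by (meson nth_mem)+
    then show ?thesis
      using closed_tree_path_prev[OF path i] distinct_walk_halfedges_transition[OF distinct p_W]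
      by (simp add: dir_single_transition_def p)
  qed
  moreover have "?W \<noteq> []" using ne by (metis length_walk_of_travs length_0_conv)
  ultimately have "oriented_circuit H E eps ?W"
    using distinct in_E by (simp add: oriented_circuit_def closed_walk_def walk_travs_walk_of_travs)
  moreover have "walk_edges ?W \<subseteq> T"
    using tree_path_edge[OF path] by (auto simp: walk_edges_def walk_travs_walk_of_travs)
  ultimately show False by (rule no_tree_circuit)
qed

lemma no_tree_loop: "{a, b} \<in> T \<Longrightarrow> eps a = eps b \<Longrightarrow> False"
  by (rule no_closed_tree_trail[of "[(a, b)]" "eps a"]) auto

(* (y, x), the path r and (b, a) form a closed trail of distinct tree edges. *)
lemma no_second_tree_edge:
  assumes path: "tree_path (eps x) (eps b) r" and distinct: "distinct (path_verts (eps x) r)"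
    and avoid: "eps y \<notin> set (path_verts (eps x) r)"
    and xy: "{x, y} \<in> T" and ab: "{a, b} \<in> T" and a: "eps a = eps y" and ne: "{a, b} \<noteq> {x, y}"
  shows False
proof (rule no_closed_tree_trail)
  show "tree_path (eps y) (eps y) ((y, x) # r @ [(b, a)])"
    using tree_path_append[OF path, of "eps y" "[(b, a)]"] xy ab a by (simp add: insert_commute)
  have "{y, x} \<notin> (\<lambda>t. {fst t, snd t}) ` set r" "{b, a} \<notin> (\<lambda>t. {fst t, snd t}) ` set r"
    using tree_path_edge_vertex[OF path, of y x] tree_path_edge_vertex[OF path, of a b] avoid a
    by auto
  then show "distinct (map (\<lambda>t. {fst t, snd t}) ((y, x) # r @ [(b, a)]))"
    using tree_path_distinct_edges[OF path distinct] ne by (auto simp: insert_commute)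
qed simp

end

section \<open>Crossing sets of a forest\<close>

definition crossings :: "('h \<Rightarrow> 'v) \<Rightarrow> ('h \<Rightarrow> 'a) \<Rightarrow> ('v \<Rightarrow> 'v set) \<Rightarrow> ('v \<Rightarrow> 'a) \<Rightarrow> 'h \<Rightarrow> 'v set"
  where "crossings eps ps Base lo h =
    (if ps h = lo (eps h) then Base (eps h) else insert (eps h) (Base (eps h)))"

lemma crossings_update_other:
  "eps h \<noteq> v \<Longrightarrow> crossings eps ps (Base(v := X)) (lo(v := l)) h = crossings eps ps Base lo h"
  by (simp add: crossings_def)

lemma crossings_update_at:
  "eps h = v \<Longrightarrow>
    crossings eps ps (Base(v := X)) (lo(v := l)) h = (if ps h = l then X else insert v X)"
  by (simp add: crossings_def)

lemma crossings_update_eq: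
  assumes "eps a \<noteq> v" and "eps b \<noteq> v" and "crossings eps ps Base lo a = crossings eps ps Base lo b"
  shows "crossings eps ps (Base(v := X)) (lo(v := l)) a = crossings eps ps (Base(v := X)) (lo(v := l)) b"
  using assms by (simp add: crossings_update_other)

locale labelled_forest = graph_forest V H E eps T
  for V :: "'v set" and H :: "'h set" and E :: "'h set set" and eps :: "'h \<Rightarrow> 'v"
    and T :: "'h set set" +
  fixes ps :: "'h \<Rightarrow> 'a"
begin

abbreviation cross :: "('v \<Rightarrow> 'v set) \<Rightarrow> ('v \<Rightarrow> 'a) \<Rightarrow> 'h \<Rightarrow> 'v set" where
  "cross \<equiv> crossings eps ps"

(* Fin holds the finished components of T and Cur the component being grown from its root.  Each
   vertex is placed either as a new root or as a leaf attached by one tree edge, and then receives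
   Base (its crossings strictly above it), lo (the single transition through which it is entered)
   and rk (its placement time). *)
inductive growth :: "'v set \<Rightarrow> 'v set \<Rightarrow> ('v \<Rightarrow> 'v set) \<Rightarrow> ('v \<Rightarrow> 'a) \<Rightarrow> ('v \<Rightarrow> nat) \<Rightarrow> bool" where
  start: "growth {} {} (\<lambda>_. {}) lo (\<lambda>_. 0)"
| new_root: "growth Fin Cur Base lo rk \<Longrightarrow>
    \<forall>a b. {a, b} \<in> T \<longrightarrow> eps a \<in> Cur \<longrightarrow> eps b \<in> Fin \<union> Cur \<Longrightarrow> h \<in> H \<Longrightarrow> eps h \<notin> Fin \<union> Cur \<Longrightarrow>
    growth (Fin \<union> Cur) {eps h} (Base(eps h := {})) (lo(eps h := ps h))
      (rk(eps h := card (Fin \<union> Cur)))"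
| attach: "growth Fin Cur Base lo rk \<Longrightarrow> {x, y} \<in> T \<Longrightarrow> eps x \<in> Cur \<Longrightarrow> eps y \<notin> Fin \<union> Cur \<Longrightarrow>
    growth Fin (insert (eps y) Cur) (Base(eps y := cross Base lo x)) (lo(eps y := ps y))
      (rk(eps y := card (Fin \<union> Cur)))"

lemma growth_placed: "growth Fin Cur Base lo rk \<Longrightarrow> Fin \<union> Cur \<subseteq> eps ` H"
proof (induction rule: growth.induct)
  case (attach Fin Cur Base lo rk x y)
  then show ?case using tree_edge_halves[OF attach.hyps(2)] by auto
qed auto

lemma growth_finite: "growth Fin Cur Base lo rk \<Longrightarrow> finite (Fin \<union> Cur)"
  using growth_placed finite_H by (meson finite_imageI finite_subset)

lemma growth_Fin_closed: "growth Fin Cur Base lo rk \<Longrightarrow> {a, b} \<in> T \<Longrightarrow> eps a \<in> Fin \<Longrightarrow> eps b \<in> Fin"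
  by (induction arbitrary: a b rule: growth.induct) blast+

lemma growth_Cur_connected:
  "growth Fin Cur Base lo rk \<Longrightarrow> u \<in> Cur \<Longrightarrow> w \<in> Cur \<Longrightarrow>
    \<exists>r. tree_path u w r \<and> distinct (path_verts u r) \<and> set (path_verts u r) \<subseteq> Cur"
proof (induction arbitrary: u w rule: growth.induct)
  case (new_root Fin Cur Base lo rk h)
  then show ?case by (intro exI[of _ "[]"]) (simp add: path_verts_def)
next
  case (attach Fin Cur Base lo rk x y)
  let ?v = "eps y"
  have new: "?v \<notin> Cur" using attach.hyps(4) by simp
  have to_new: "\<exists>r. tree_path u ?v r \<and> distinct (path_verts u r) \<and> set (path_verts u r) \<subseteq> insert ?v Cur"
    if u: "u \<in> Cur" for u
  proof -
    obtain r where r: "tree_path u (eps x) r" "distinct (path_verts u r)" "set (path_verts u r) \<subseteq> Cur"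
      using attach.IH[OF u attach.hyps(3)] by blast
    have "tree_path u ?v (r @ [(x, y)])" using tree_path_append[OF r(1)] attach.hyps(2) by simp
    moreover have "path_verts u (r @ [(x, y)]) = path_verts u r @ [?v]" by (simp add: path_verts_def)
    ultimately show ?thesis using r new by (intro exI[of _ "r @ [(x, y)]"]) auto
  qed
  have from_new: "\<exists>r. tree_path ?v w r \<and> distinct (path_verts ?v r) \<and> set (path_verts ?v r) \<subseteq> insert ?v Cur"
    if w: "w \<in> Cur" for w
  proof -
    obtain r where r: "tree_path (eps x) w r" "distinct (path_verts (eps x) r)" "set (path_verts (eps x) r) \<subseteq> Cur"
      using attach.IH[OF attach.hyps(3) w] by blast
    have "tree_path ?v w ((y, x) # r)" using r(1) attach.hyps(2) by (simp add: insert_commute)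
    moreover have "path_verts ?v ((y, x) # r) = ?v # path_verts (eps x) r" by (simp add: path_verts_def)
    ultimately show ?thesis using r new by (intro exI[of _ "(y, x) # r"]) auto
  qed
  consider "u \<in> Cur" "w \<in> Cur" | "u \<in> Cur" "w = ?v" | "u = ?v" "w \<in> Cur" | "u = ?v" "w = ?v"
    using attach.prems by blast
  then show ?case
  proof cases
    case 1
    then show ?thesis using attach.IH by blast
  next
    case 4
    then show ?thesis by (intro exI[of _ "[]"]) (simp add: path_verts_def)
  qed (use to_new from_new in simp_all)
qed simp

lemma growth_Base: "growth Fin Cur Base lo rk \<Longrightarrow> Base v \<subseteq> (Fin \<union> Cur) - {v}"
proof (induction arbitrary: v rule: growth.induct)
  case (attach Fin Cur Base lo rk x y)
  have "cross Base lo x \<subseteq> Fin \<union> Cur" using attach.IH attach.hyps(3) by (auto simp: crossings_def)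
  then show ?case using attach.IH attach.hyps(4) by auto
qed auto

lemma growth_rank_bound: "growth Fin Cur Base lo rk \<Longrightarrow> v \<in> Fin \<union> Cur \<Longrightarrow> rk v < card (Fin \<union> Cur)"
proof (induction arbitrary: v rule: growth.induct)
  case (new_root Fin Cur Base lo rk h)
  then show ?case using growth_finite[OF new_root.hyps(1)] by (auto simp: less_Suc_eq)
next
  case (attach Fin Cur Base lo rk x y)
  then show ?case using growth_finite[OF attach.hyps(1)] by (auto simp: less_Suc_eq)
qed simp

lemma growth_lo: "growth Fin Cur Base lo rk \<Longrightarrow> v \<in> Fin \<union> Cur \<Longrightarrow> \<exists>h\<in>H. eps h = v \<and> lo v = ps h"
proof (induction arbitrary: v rule: growth.induct)
  case (attach Fin Cur Base lo rk x y)
  then show ?case using tree_edge_halves[OF attach.hyps(2)] by auto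
qed auto

end

context labelled_forest
begin

lemma growth_attached_edge:
  assumes g: "growth Fin Cur Base lo rk" and xy: "{x, y} \<in> T" and x: "eps x \<in> Cur"
    and y: "eps y \<notin> Fin \<union> Cur"
    and ab: "{a, b} \<in> T" and a: "eps a = eps y" and b: "eps b \<in> Fin \<union> Cur"
  shows "a = y \<and> b = x"
proof -
  have "eps b \<notin> Fin"
    using growth_Fin_closed[OF g, of b a] ab a y by (auto simp: insert_commute)
  then have b_Cur: "eps b \<in> Cur" using b by simp
  have "{a, b} = {x, y}"
  proof (rule ccontr)
    assume ne: "{a, b} \<noteq> {x, y}"
    obtain r where r: "tree_path (eps x) (eps b) r" "distinct (path_verts (eps x) r)"
      "set (path_verts (eps x) r) \<subseteq> Cur"
      using growth_Cur_connected[OF g x b_Cur] by blast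
    have "eps y \<notin> set (path_verts (eps x) r)" using r(3) y by blast
    from no_second_tree_edge[OF r(1,2) this xy ab a ne] show False .
  qed
  moreover have "a \<noteq> x" using a x y by auto
  ultimately show ?thesis by (auto simp: doubleton_eq_iff)
qed

lemma growth_cross_tree_edge:
  "growth Fin Cur Base lo rk \<Longrightarrow> {a, b} \<in> T \<Longrightarrow> eps a \<in> Fin \<union> Cur \<Longrightarrow> eps b \<in> Fin \<union> Cur \<Longrightarrow>
    cross Base lo a = cross Base lo b"
proof (induction rule: growth.induct)
  case (new_root Fin Cur Base lo rk h)
  have closed: "eps a' \<in> Fin \<union> Cur" if "{a', b'} \<in> T" "eps b' \<in> Fin \<union> Cur" for a' b'
    using that new_root.hyps(2)[rule_format, of b' a'] growth_Fin_closed[OF new_root.hyps(1), of b' a']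
    by (auto simp: insert_commute)
  have "eps a \<in> Fin \<union> Cur" "eps b \<in> Fin \<union> Cur"
    using new_root.prems closed[of a b] closed[of b a] no_tree_loop[of a b] new_root.hyps(4)
    by (auto simp: insert_commute)
  then show ?case using new_root.IH[OF new_root.prems(1)] new_root.hyps(4)
    by (intro crossings_update_eq) auto
next
  case (attach Fin Cur Base lo rk x y)
  let ?v = "eps y"
  have x_old: "eps x \<noteq> ?v" using attach.hyps(3,4) by auto
  have cross_x: "cross (Base(?v := cross Base lo x)) (lo(?v := ps y)) x = cross Base lo x"
    "cross (Base(?v := cross Base lo x)) (lo(?v := ps y)) y = cross Base lo x"
    using x_old by (simp_all add: crossings_update_other crossings_update_at)
  consider "eps a \<in> Fin \<union> Cur" "eps b \<in> Fin \<union> Cur" | "eps a = ?v" "eps b \<in> Fin \<union> Cur"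
    | "eps a \<in> Fin \<union> Cur" "eps b = ?v" | "eps a = ?v" "eps b = ?v"
    using attach.prems by auto
  then show ?case
  proof cases
    case 1
    then show ?thesis using attach.IH[OF attach.prems(1)] attach.hyps(4)
      by (intro crossings_update_eq) auto
  next
    case 2
    then show ?thesis
      using growth_attached_edge[OF attach.hyps attach.prems(1)] cross_x by (simp only:)
  next
    case 3
    then show ?thesis
      using growth_attached_edge[OF attach.hyps, of b a] attach.prems(1) cross_x
      by (simp only: insert_commute simp_thms)
  next
    case 4
    then show ?thesis using no_tree_loop[OF attach.prems(1)] by simp
  qed
qed simp

lemma ranked_after_placing:
  assumes ranked: "ranked_family rk (cross Base lo ` {h \<in> H. eps h \<in> P})"
    and Base: "\<And>u. Base u \<subseteq> P - {u}" and v: "v \<notin> P" and bound: "\<forall>c\<in>P. rk c < N"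
    and X0: "X0 \<in> cross Base lo ` {h \<in> H. eps h \<in> P} \<or> X0 = {}"
  shows "ranked_family (rk(v := N)) (cross (Base(v := X0)) (lo(v := l)) ` {h \<in> H. eps h \<in> insert v P})"
proof -
  let ?F = "cross Base lo ` {h \<in> H. eps h \<in> P}"
  have below: "\<Union>?F \<subseteq> P" using Base by (auto simp: crossings_def)
  have "ranked_family (rk(v := N)) ?F"
    by (rule ranked_family_cong[OF ranked]) (use below v in auto)
  then have "ranked_family (rk(v := N)) (?F \<union> {X0, insert v X0})"
    by (rule ranked_family_insert_top[OF _ below v _ X0]) (use bound v in auto)
  moreover have "cross (Base(v := X0)) (lo(v := l)) h \<in> ?F \<union> {X0, insert v X0}"
    if "h \<in> H" "eps h \<in> insert v P" for h
  proof (cases "eps h = v")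
    case False
    then have "cross Base lo h \<in> ?F" using that by auto
    then show ?thesis using False by (simp add: crossings_update_other)
  qed (simp add: crossings_update_at)
  then have "cross (Base(v := X0)) (lo(v := l)) ` {h \<in> H. eps h \<in> insert v P} \<subseteq> ?F \<union> {X0, insert v X0}"
    by blast
  ultimately show ?thesis by (rule ranked_family_mono)
qed

lemma growth_ranked:
  "growth Fin Cur Base lo rk \<Longrightarrow> ranked_family rk (cross Base lo ` {h \<in> H. eps h \<in> Fin \<union> Cur})"
proof (induction rule: growth.induct)
  case (start lo)
  then show ?case by (simp add: ranked_family_def)
next
  case (new_root Fin Cur Base lo rk h)
  have placed: "Fin \<union> Cur \<union> {eps h} = insert (eps h) (Fin \<union> Cur)" by blast
  show ?case unfolding placed
    by (rule ranked_after_placing[OF new_root.IH growth_Base[OF new_root.hyps(1)] new_root.hyps(4)])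
      (use growth_rank_bound[OF new_root.hyps(1)] in auto)
next
  case (attach Fin Cur Base lo rk x y)
  have x: "x \<in> H" "eps x \<in> Fin \<union> Cur" using tree_edge_halves[OF attach.hyps(2)] attach.hyps(3) by auto
  have placed: "Fin \<union> insert (eps y) Cur = insert (eps y) (Fin \<union> Cur)" by blast
  show ?case unfolding placed
    by (rule ranked_after_placing[OF attach.IH growth_Base[OF attach.hyps(1)] attach.hyps(4)])
      (use growth_rank_bound[OF attach.hyps(1)] x in auto)
qed

lemma growth_extend:
  assumes g: "growth Fin Cur Base lo rk" and incomplete: "Fin \<union> Cur \<noteq> eps ` H"
  shows "\<exists>Fin' Cur' Base' lo' rk'. growth Fin' Cur' Base' lo' rk' \<and> Fin \<union> Cur \<subset> Fin' \<union> Cur'"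
proof (cases "\<exists>x y. {x, y} \<in> T \<and> eps x \<in> Cur \<and> eps y \<notin> Fin \<union> Cur")
  case True
  then obtain x y where "{x, y} \<in> T" "eps x \<in> Cur" "eps y \<notin> Fin \<union> Cur" by blast
  then show ?thesis using growth.attach[OF g] by blast
next
  case False
  obtain h where "h \<in> H" "eps h \<notin> Fin \<union> Cur" using incomplete growth_placed[OF g] by auto
  then show ?thesis using growth.new_root[OF g] False by blast
qed

lemma growth_complete: "\<exists>Fin Cur Base lo rk. growth Fin Cur Base lo rk \<and> Fin \<union> Cur = eps ` H"
proof -
  have "\<exists>Fin' Cur' Base' lo' rk'. growth Fin' Cur' Base' lo' rk' \<and> Fin' \<union> Cur' = eps ` H"
    if "growth Fin Cur Base lo rk" for Fin Cur Base lo rk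
    using that
  proof (induction "card (eps ` H - (Fin \<union> Cur))" arbitrary: Fin Cur Base lo rk rule: less_induct)
    case less
    show ?case
    proof (cases "Fin \<union> Cur = eps ` H")
      case False
      then obtain Fin' Cur' Base' lo' rk' where g': "growth Fin' Cur' Base' lo' rk'"
        and larger: "Fin \<union> Cur \<subset> Fin' \<union> Cur'"
        using growth_extend[OF less.prems] by blast
      have "eps ` H - (Fin' \<union> Cur') \<subset> eps ` H - (Fin \<union> Cur)"
        using larger growth_placed[OF g'] by blast
      then have "card (eps ` H - (Fin' \<union> Cur')) < card (eps ` H - (Fin \<union> Cur))"
        using finite_H by (meson finite_Diff finite_imageI psubset_card_mono)
      then show ?thesis using less.hyps g' by blast
    qed (use less.prems in blast)
  qed
  then show ?thesis using growth.start by blast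
qed

theorem consistent_crossings_exist:
  obtains Base lo rk where "\<forall>a b. {a, b} \<in> T \<longrightarrow> cross Base lo a = cross Base lo b"
    and "\<forall>h\<in>H. eps h \<notin> Base (eps h)"
    and "\<forall>h\<in>H. \<exists>h'\<in>H. eps h' = eps h \<and> lo (eps h) = ps h'"
    and "ranked_family rk (cross Base lo ` H)"
proof -
  obtain Fin Cur Base lo rk where g: "growth Fin Cur Base lo rk" and all: "Fin \<union> Cur = eps ` H"
    using growth_complete by blast
  show ?thesis
  proof (rule that; (intro allI ballI impI)?)
    show "cross Base lo a = cross Base lo b" if "{a, b} \<in> T" for a b
      using growth_cross_tree_edge[OF g that] tree_edge_halves[OF that] all by auto
    show "eps h \<notin> Base (eps h)" for h using growth_Base[OF g] by blast
    show "\<exists>h'\<in>H. eps h' = eps h \<and> lo (eps h) = ps h'" if "h \<in> H" for h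
      using growth_lo[OF g] that all by blast
    have "{h \<in> H. eps h \<in> Fin \<union> Cur} = H" using all by auto
    then show "ranked_family rk (cross Base lo ` H)" using growth_ranked[OF g] by simp
  qed
qed

end

section \<open>The touch-graph\<close>

lemma pst_unique:
  assumes "circuit_partition H E eps P" and "h \<in> H"
  shows "\<exists>!s. s \<in> tch_halfedges P \<and> h \<in> s"
proof -
  have "\<exists>!cs. fst cs \<in> P \<and> snd cs \<in> strans (fst cs) \<and> h \<in> snd cs"
    using assms unfolding circuit_partition_def by blast
  then obtain cs where cs: "fst cs \<in> P" "snd cs \<in> strans (fst cs)" "h \<in> snd cs"
    and unique: "\<And>cs'. fst cs' \<in> P \<and> snd cs' \<in> strans (fst cs') \<and> h \<in> snd cs' \<Longrightarrow> cs' = cs"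
    by (elim ex1E) blast
  show ?thesis
  proof (rule ex1I[of _ "snd cs"])
    show "snd cs \<in> tch_halfedges P \<and> h \<in> snd cs" using cs unfolding tch_halfedges_def by blast
  next
    fix s assume "s \<in> tch_halfedges P \<and> h \<in> s"
    then obtain C where "C \<in> P" "s \<in> strans C" "h \<in> s" unfolding tch_halfedges_def by blast
    then have "(C, s) = cs" using unique by simp
    then show "s = snd cs" by auto
  qed
qed

lemma pst_mem:
  assumes "circuit_partition H E eps P" and "h \<in> H"
  shows "h \<in> pst P h" and "pst P h \<in> tch_halfedges P"
  using theI'[OF pst_unique[OF assms]] unfolding pst_def by blast+

lemma pst_eq:
  assumes "circuit_partition H E eps P" and "h \<in> H" and "s \<in> tch_halfedges P" and "h \<in> s"
  shows "pst P h = s"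
  unfolding pst_def by (rule the1_equality[OF pst_unique[OF assms(1,2)]]) (use assms in blast)

lemma tch_halfedge_nonempty: "s \<in> tch_halfedges P \<Longrightarrow> s \<noteq> {}"
  by (auto simp: tch_halfedges_def strans_def)

definition transition_vertex :: "('h \<Rightarrow> 'v) \<Rightarrow> 'h set set \<Rightarrow> 'v" where
  "transition_vertex eps c = the_elem (eps ` \<Union>c)"

lemma tch_edge_structure:
  assumes "c \<in> tch_edges V H eps P"
  obtains s1 s2 where "c = {s1, s2}" and "s1 \<in> tch_halfedges P" and "s2 \<in> tch_halfedges P"
    and "s1 \<inter> s2 = {}" and "s1 \<union> s2 = {h \<in> H. eps h = transition_vertex eps c}"
    and "\<exists>h\<in>H. eps h = transition_vertex eps c"
proof -
  obtain s1 s2 v where s: "c = {s1, s2}" "s1 \<in> tch_halfedges P" "s2 \<in> tch_halfedges P"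
    "s1 \<inter> s2 = {}" and at_v: "s1 \<union> s2 = {h \<in> H. eps h = v}"
    using assms unfolding tch_edges_def mem_Collect_eq by (elim exE conjE bexE) simp
  have "s1 \<noteq> {}" by (rule tch_halfedge_nonempty[OF s(2)])
  then obtain h0 where "h0 \<in> s1" by blast
  then have h0: "h0 \<in> H" "eps h0 = v" using at_v by blast+
  have "\<Union>c = {h \<in> H. eps h = v}" using s(1) at_v by simp
  then have "eps ` \<Union>c = {v}" using h0 by blast
  then have "transition_vertex eps c = v" by (simp add: transition_vertex_def)
  then show ?thesis using that s at_v h0 by blast
qed

lemma pst_in_tch_edge_iff:
  assumes cp: "circuit_partition H E eps P" and c: "c \<in> tch_edges V H eps P" and h: "h \<in> H"
  shows "pst P h \<in> c \<longleftrightarrow> eps h = transition_vertex eps c"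
proof -
  obtain s1 s2 where s: "c = {s1, s2}" "s1 \<in> tch_halfedges P" "s2 \<in> tch_halfedges P"
    and at_v: "s1 \<union> s2 = {h \<in> H. eps h = transition_vertex eps c}"
    by (rule tch_edge_structure[OF c])
  show ?thesis
  proof
    assume "pst P h \<in> c"
    then have "h \<in> s1 \<union> s2" using pst_mem(1)[OF cp h] s(1) by auto
    then show "eps h = transition_vertex eps c" using at_v by blast
  next
    assume "eps h = transition_vertex eps c"
    then have "h \<in> s1 \<or> h \<in> s2" using at_v h by blast
    then show "pst P h \<in> c" using pst_eq[OF cp h s(2)] pst_eq[OF cp h s(3)] s(1) by blast
  qed
qed

definition trav_sign :: "('a set \<Rightarrow> 'a) \<Rightarrow> 'a set \<Rightarrow> 'a \<times> 'a \<Rightarrow> int" where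
  "trav_sign tail e t =
    of_bool ({fst t, snd t} = e \<and> fst t = tail e) - of_bool ({fst t, snd t} = e \<and> snd t = tail e)"

lemma int_length_filter: "int (length (filter Q xs)) = (\<Sum>x\<leftarrow>xs. of_bool (Q x))"
  by (induction xs) auto

lemma sigma_trav_sum_list: "sigma_trav tail trs e = (\<Sum>t\<leftarrow>trs. trav_sign tail e t)"
  unfolding sigma_trav_def trav_sign_def int_length_filter by (simp add: sum_list_subtractf)

lemma trav_sign_stay [simp]: "trav_sign tail e (s, s) = 0"
  by (simp add: trav_sign_def)

lemma CM_touch_sum_list:
  "CM_touch tail P W e = (\<Sum>p\<leftarrow>W. trav_sign tail e (pst P (fst p), pst P (snd p)))"
  unfolding CM_touch_def piP_def sigma_trav_sum_list by (induction W) auto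

lemma trav_sign_transition:
  assumes c: "c = {s1, s2}" "s1 \<noteq> s2" and at_v: "\<And>h. h \<in> H \<Longrightarrow> ps h \<in> c \<longleftrightarrow> eps h = v"
    and tail: "tail c \<in> c" and lo: "lo v \<in> c" and Base: "v \<notin> Base v"
    and h: "h \<in> H" "h' \<in> H" "eps h = eps h'"
  shows "trav_sign tail c (ps h, ps h') = (if tail c = lo v then -1 else 1) *
    (of_bool (v \<in> crossings eps ps Base lo h) - of_bool (v \<in> crossings eps ps Base lo h'))"
proof (cases "eps h = v")
  case True
  have crosses: "v \<in> crossings eps ps Base lo g \<longleftrightarrow> ps g \<noteq> lo v" if "eps g = v" for g
    using that Base by (simp add: crossings_def)
  have "ps h = s1 \<or> ps h = s2" "ps h' = s1 \<or> ps h' = s2"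
    using at_v h True c(1) by auto
  moreover have "tail c = s1 \<or> tail c = s2" "lo v = s1 \<or> lo v = s2" using tail lo c(1) by auto
  ultimately show ?thesis unfolding crosses[OF True] crosses[OF True[unfolded h(3)]]
    by (elim disjE) (simp_all add: trav_sign_def c insert_commute c(2)[symmetric])
next
  case False
  then have "ps h \<notin> c" using at_v h by blast
  then have "{ps h, ps h'} \<noteq> c" by blast
  then show ?thesis using False h(3) by (simp add: trav_sign_def crossings_def)
qed

locale touch_forest = graph_forest V H E eps T
  for V :: "'v set" and H :: "'h set" and E :: "'h set set" and eps :: "'h \<Rightarrow> 'v"
    and T :: "'h set set" +
  fixes P :: "('h \<times> 'h) list set"
  assumes partition: "circuit_partition H E eps P"

sublocale touch_forest \<subseteq> labelled_forest V H E eps T "pst P" by unfold_locales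

context touch_forest
begin

lemma transition_contribution:
  assumes tail: "directed_version (tch_edges V H eps P) tail"
    and Base: "\<And>h. h \<in> H \<Longrightarrow> eps h \<notin> Base (eps h)"
    and lo: "\<And>h. h \<in> H \<Longrightarrow> \<exists>h'\<in>H. eps h' = eps h \<and> lo (eps h) = pst P h'"
    and c: "c \<in> tch_edges V H eps P" and p: "dir_single_transition H eps p"
  shows "trav_sign tail c (pst P (fst p), pst P (snd p)) =
    (if tail c = lo (transition_vertex eps c) then -1 else 1) *
    (of_bool (transition_vertex eps c \<in> cross Base lo (fst p))
      - of_bool (transition_vertex eps c \<in> cross Base lo (snd p)))"
proof -
  let ?v = "transition_vertex eps c"
  obtain s1 s2 where c_eq: "c = {s1, s2}" and s1: "s1 \<in> tch_halfedges P" and "s2 \<in> tch_halfedges P"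
    and disjoint: "s1 \<inter> s2 = {}" and "s1 \<union> s2 = {h \<in> H. eps h = ?v}" and "\<exists>h\<in>H. eps h = ?v"
    by (rule tch_edge_structure[OF c])
  obtain h where h: "h \<in> H" "eps h = ?v" using \<open>\<exists>h\<in>H. eps h = ?v\<close> by blast
  have c_ne: "s1 \<noteq> s2" using tch_halfedge_nonempty[OF s1] disjoint by blast
  note at_v = pst_in_tch_edge_iff[OF partition c]
  have lo_v: "lo ?v \<in> c" using lo[OF h(1)] at_v h by auto
  have Base_v: "?v \<notin> Base ?v" using Base[OF h(1)] h(2) by simp
  have tail_c: "tail c \<in> c" using tail c by (simp add: directed_version_def)
  have "fst p \<in> H" "snd p \<in> H" "eps (fst p) = eps (snd p)"
    using p by (auto simp: dir_single_transition_def)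
  then show ?thesis
    using trav_sign_transition[where ps = "pst P" and eps = eps and tail = tail and lo = lo
        and Base = Base, OF c_eq c_ne at_v tail_c lo_v Base_v] by simp
qed

lemma fundamental_row:
  assumes tail: "directed_version (tch_edges V H eps P) tail"
    and consistent: "\<And>a b. {a, b} \<in> T \<Longrightarrow> cross Base lo a = cross Base lo b"
    and Base: "\<And>h. h \<in> H \<Longrightarrow> eps h \<notin> Base (eps h)"
    and lo: "\<And>h. h \<in> H \<Longrightarrow> \<exists>h'\<in>H. eps h' = eps h \<and> lo (eps h) = pst P h'"
    and W: "oriented_circuit H E eps W" and fundamental: "walk_edges W - T = {e}"
    and t0: "t0 \<in> set (walk_travs W)" "{fst t0, snd t0} = e"
    and c: "c \<in> tch_edges V H eps P"
  shows "CM_touch tail P W c = (if tail c = lo (transition_vertex eps c) then -1 else 1) *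
    (of_bool (transition_vertex eps c \<in> cross Base lo (snd t0))
      - of_bool (transition_vertex eps c \<in> cross Base lo (fst t0)))"
proof -
  define \<sigma> :: int where "\<sigma> = (if tail c = lo (transition_vertex eps c) then -1 else 1)"
  define f :: "'h \<Rightarrow> int" where "f h = of_bool (transition_vertex eps c \<in> cross Base lo h)" for h
  have transition: "trav_sign tail c (pst P (fst p), pst P (snd p)) = \<sigma> * (f (fst p) - f (snd p))"
    if p: "p \<in> set W" for p
  proof -
    have "dir_single_transition H eps p" using W p by (simp add: oriented_circuit_def closed_walk_def)
    from transition_contribution[OF tail Base lo c this] show ?thesis by (simp add: \<sigma>_def f_def)
  qed
  have flat: "f (snd t) = f (fst t)" if "t \<in> set (walk_travs W)" "t \<noteq> t0" for t
    using consistent[OF fundamental_circuit_other_traversals[OF W fundamental t0 that]]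
    by (simp add: f_def)
  have "CM_touch tail P W c = (\<Sum>p\<leftarrow>W. \<sigma> * (f (fst p) - f (snd p)))"
    unfolding CM_touch_sum_list by (rule arg_cong[where f = sum_list], rule map_cong[OF refl], rule transition)
  also have "\<dots> = \<sigma> * (\<Sum>p\<leftarrow>W. f (fst p) - f (snd p))" by (rule sum_list_const_mult)
  also have "(\<Sum>p\<leftarrow>W. f (fst p) - f (snd p)) = (\<Sum>t\<leftarrow>walk_travs W. f (snd t) - f (fst t))"
    by (rule sum_transitions_telescope)
  also have "\<dots> = f (snd t0) - f (fst t0)"
    by (rule sum_differences_single_jump[OF _ t0(1) flat])
      (use W in \<open>simp add: oriented_circuit_def distinct_walk_travs\<close>)
  finally show ?thesis unfolding \<sigma>_def f_def .
qed

lemma fundamental_row_indicator_diff: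
  assumes tail: "directed_version (tch_edges V H eps P) tail"
    and consistent: "\<And>a b. {a, b} \<in> T \<Longrightarrow> cross Base lo a = cross Base lo b"
    and Base: "\<And>h. h \<in> H \<Longrightarrow> eps h \<notin> Base (eps h)"
    and lo: "\<And>h. h \<in> H \<Longrightarrow> \<exists>h'\<in>H. eps h' = eps h \<and> lo (eps h) = pst P h'"
    and W: "oriented_circuit H E eps W" and fundamental: "walk_edges W - T = {e}"
  shows "\<exists>X\<in>cross Base lo ` H. \<exists>Y\<in>cross Base lo ` H. \<forall>c\<in>tch_edges V H eps P.
    CM_touch tail P W c = (if tail c = lo (transition_vertex eps c) then -1 else 1) *
      (of_bool (transition_vertex eps c \<in> X) - of_bool (transition_vertex eps c \<in> Y))"
proof -
  have "e \<in> walk_edges W" using fundamental by blast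
  then obtain t0 where t0: "t0 \<in> set (walk_travs W)" "{fst t0, snd t0} = e"
    unfolding walk_edges_def by blast
  have "e \<in> E" using W t0 by (auto simp: oriented_circuit_def closed_walk_def)
  then have "fst t0 \<in> H" "snd t0 \<in> H" using edge_halves t0(2) by blast+
  then show ?thesis
    using fundamental_row[OF tail consistent Base lo W fundamental t0] by blast
qed

end

theorem mainTheorem12:
  fixes V :: "'v set" and H :: "'h set" and E :: "'h set set" and eps :: "'h \<Rightarrow> 'v"
    and P :: "('h \<times> 'h) list set" and B :: "('h \<times> 'h) list set"
    and tlD :: "'h set set \<Rightarrow> 'h set"
  assumes "graph V H E eps"
    and "four_regular V H eps"
    and "circuit_partition H E eps P"
    and "directed_version (tch_edges V H eps P) tlD"
    and "strictly_fundamental_cycle_basis H E eps B"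
  shows "totally_unimodular B (tch_edges V H eps P) (CM_touch tlD P)"
proof -
  obtain T fW where forest: "forest H E eps T"
    and basis: "\<forall>W\<in>B. oriented_circuit H E eps W \<and> walk_edges W - T = {fW W}"
    using assms(5) unfolding strictly_fundamental_cycle_basis_def strictly_fundamental_basis_def
      maximal_forest_def by blast
  interpret touch_forest V H E eps T P
    by (rule touch_forest.intro[OF graph_forest.intro[OF assms(1) forest] touch_forest_axioms.intro[OF assms(3)]])
  obtain Base lo rk where consistent: "\<forall>a b. {a, b} \<in> T \<longrightarrow> cross Base lo a = cross Base lo b"
    and Base: "\<forall>h\<in>H. eps h \<notin> Base (eps h)"
    and lo: "\<forall>h\<in>H. \<exists>h'\<in>H. eps h' = eps h \<and> lo (eps h) = pst P h'"
    and ranked: "ranked_family rk (cross Base lo ` H)"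
    by (rule consistent_crossings_exist)
  show ?thesis
  proof (rule totally_unimodular_indicator_rows[OF ranked,
        where d = "\<lambda>c. if tlD c = lo (transition_vertex eps c) then -1 else 1"
          and \<kappa> = "transition_vertex eps"])
    show "\<forall>c\<in>tch_edges V H eps P. (if tlD c = lo (transition_vertex eps c) then -1 else 1) \<in> {1, -1 :: int}"
      by simp
    show "\<forall>W\<in>B. \<exists>X\<in>cross Base lo ` H. \<exists>Y\<in>cross Base lo ` H. \<forall>c\<in>tch_edges V H eps P.
      CM_touch tlD P W c = (if tlD c = lo (transition_vertex eps c) then -1 else 1) *
        (of_bool (transition_vertex eps c \<in> X) - of_bool (transition_vertex eps c \<in> Y))"
      by (intro ballI fundamental_row_indicator_diff[OF assms(4) consistent[rule_format] Base[rule_format]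
            lo[rule_format]]) (use basis in auto)
  qed
qed

end
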